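(* For every $N\ge3$, the given generators of $I_N$ form a regular sequence in $\mathbb C[k_1,\dots,k_N]$ and the given generators of $I'_N$ form a regular sequence in $\mathbb C[v_1,w_1,\dots,v_N,w_N]$; so the quotients are complete intersections.
   Context: Write $k_i=\begin{pmatrix}a_i&b_i\\c_i&d_i\end{pmatrix}$ ($4N$ variables), $Q_i=a_id_i-b_ic_i$, and let $v_i,w_i$ be $2$-component column vectors of variables ($4N$ variables). $I_N\subset\mathbb C[k_1,\dots,k_N]$ is generated by the four entries of $k_1+\dots+k_N$ and $Q_1,\dots,Q_N$; $I'_N\subset\mathbb C[v,w]$ is generated by the four entries of $v_1w_1^T+\dots+v_Nw_N^T$. *)

theory Defs
  imports Complex_Main "HOL-Library.Poly_Mapping"
begin

type_synonym mpoly = "(nat \<Rightarrow>\<^sub>0 nat) \<Rightarrow>\<^sub>0 complex"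

definition Var :: "nat \<Rightarrow> mpoly" where
  "Var i = Poly_Mapping.single (Poly_Mapping.single i 1) 1"

definition vars :: "mpoly \<Rightarrow> nat set" where
  "vars p = \<Union> (Poly_Mapping.keys ` Poly_Mapping.keys p)"

definition poly_ring :: "nat \<Rightarrow> mpoly set" where
  "poly_ring n = {p. vars p \<subseteq> {..<n}}"

definition ideal_gen :: "nat \<Rightarrow> mpoly list \<Rightarrow> mpoly set" where
  "ideal_gen n fs = {(\<Sum>i<length fs. a i * fs ! i) | a. \<forall>i. a i \<in> poly_ring n}"

definition regular_seq :: "nat \<Rightarrow> mpoly list \<Rightarrow> bool" where
  "regular_seq n fs \<longleftrightarrow>
     set fs \<subseteq> poly_ring n \<and>
     1 \<notin> ideal_gen n fs \<and>
     (\<forall>i<length fs. \<forall>g\<in>poly_ring n.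
        g * fs ! i \<in> ideal_gen n (take i fs) \<longrightarrow> g \<in> ideal_gen n (take i fs))"

text \<open>Variables of C[k_1,...,k_N] (indices 0..N-1): k_i = [[a_i,b_i],[c_i,d_i]]
  with a_i = X_(4i), b_i = X_(4i+1), c_i = X_(4i+2), d_i = X_(4i+3).\<close>
definition ka :: "nat \<Rightarrow> mpoly" where "ka i = Var (4*i)"
definition kb :: "nat \<Rightarrow> mpoly" where "kb i = Var (4*i+1)"
definition kc :: "nat \<Rightarrow> mpoly" where "kc i = Var (4*i+2)"
definition kd :: "nat \<Rightarrow> mpoly" where "kd i = Var (4*i+3)"

definition gens_I :: "nat \<Rightarrow> mpoly list" where
  "gens_I N = [\<Sum>i<N. ka i, \<Sum>i<N. kb i, \<Sum>i<N. kc i, \<Sum>i<N. kd i]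
              @ map (\<lambda>i. ka i * kd i - kb i * kc i) [0..<N]"

text \<open>Variables of C[v,w]: v_i = (X_(4i), X_(4i+1))^T, w_i = (X_(4i+2), X_(4i+3))^T.\<close>
definition vv :: "nat \<Rightarrow> nat \<Rightarrow> mpoly" where "vv i j = Var (4*i + j)"
definition ww :: "nat \<Rightarrow> nat \<Rightarrow> mpoly" where "ww i j = Var (4*i + 2 + j)"

definition gens_I' :: "nat \<Rightarrow> mpoly list" where
  "gens_I' N = [\<Sum>i<N. vv i 0 * ww i 0, \<Sum>i<N. vv i 0 * ww i 1,
                \<Sum>i<N. vv i 1 * ww i 0, \<Sum>i<N. vv i 1 * ww i 1]"

end

theory Submission
  imports Defs
begin

text \<open>
  Give every variable a weight in \<nat> such that each generator has a unique term of maximal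
  weight, its initial monomial, and such that these initial monomials are pairwise coprime.
  Then the generators behave like a Groebner basis for the weight: in any element of the ideal
  generated by the first k of them, every term of maximal weight is divisible by one of the first
  k initial monomials (induction on k, after reducing the cofactor of the k-th generator modulo
  the earlier ones). If g is reduced modulo f_0, ..., f_(k-1), the top term of g f_k is the top
  term of g times the initial monomial of f_k, which by coprimality is divisible by none of the
  earlier initial monomials; hence f_k is a non-zero-divisor modulo f_0, ..., f_(k-1). The
  monomial 1 is divisible by no initial monomial, so 1 is not in the ideal.

  For I_N the initial monomials are a_1, b_2, c_3, d_1, b_1 c_1 and a_i d_i for i >= 2. The four
  linear generators need their leading variables in three different blocks, which is where
  N >= 3 enters. For I'_N the four entries of the sum of the v_i w_i^T take their initial terms
  from the blocks 1, 2, 3, 1, without sharing a variable.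
\<close>

section \<open>Polynomial rings and generated ideals\<close>

type_synonym monom = "nat \<Rightarrow>\<^sub>0 nat"

abbreviation lookup where "lookup \<equiv> Poly_Mapping.lookup"
abbreviation keys where "keys \<equiv> Poly_Mapping.keys"
abbreviation single where "single \<equiv> Poly_Mapping.single"

lemma lookup_mult_keys:
  fixes p q :: mpoly
  shows "lookup (p * q) k = (\<Sum>a\<in>keys p. \<Sum>b\<in>keys q. lookup p a * lookup q b when k = a + b)"
proof -
  have "lookup (p * q) k = Sum_any (\<lambda>a. lookup p a * Sum_any (\<lambda>b. lookup q b when k = a + b))"
    by (rule lookup_mult)
  also have "\<dots> = (\<Sum>a\<in>keys p. lookup p a * Sum_any (\<lambda>b. lookup q b when k = a + b))"
    by (rule Sum_any.expand_superset) (auto simp: in_keys_iff)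
  also have "\<dots> = (\<Sum>a\<in>keys p. lookup p a * (\<Sum>b\<in>keys q. lookup q b when k = a + b))"
    by (intro sum.cong refl arg_cong[where f = "(*) _"] Sum_any.expand_superset)
      (auto simp: in_keys_iff)
  finally show ?thesis by (simp add: sum_distrib_left mult_when)
qed

lemma keys_add_monom: "keys (a + b :: monom) = keys a \<union> keys b"
  by (auto simp: in_keys_iff lookup_add)

lemma poly_ring_iff: "p \<in> poly_ring n \<longleftrightarrow> (\<forall>t\<in>keys p. keys t \<subseteq> {..<n})"
  by (auto simp: poly_ring_def vars_def)

lemma zero_in_poly_ring [simp]: "0 \<in> poly_ring n"
  by (simp add: poly_ring_iff)

lemma one_in_poly_ring [simp]: "1 \<in> poly_ring n"
  by (simp add: poly_ring_iff)

lemma poly_ring_add: "p \<in> poly_ring n \<Longrightarrow> q \<in> poly_ring n \<Longrightarrow> p + q \<in> poly_ring n"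
  unfolding poly_ring_iff using keys_add[of p q] by blast

lemma poly_ring_uminus: "p \<in> poly_ring n \<Longrightarrow> - p \<in> poly_ring n"
  unfolding poly_ring_iff by simp

lemma poly_ring_diff: "p \<in> poly_ring n \<Longrightarrow> q \<in> poly_ring n \<Longrightarrow> p - q \<in> poly_ring n"
  using poly_ring_add[of p n "- q"] poly_ring_uminus by simp

lemma poly_ring_mult: "p \<in> poly_ring n \<Longrightarrow> q \<in> poly_ring n \<Longrightarrow> p * q \<in> poly_ring n"
  unfolding poly_ring_iff using keys_mult[of p q] by (fastforce simp: keys_add_monom)

lemma poly_ring_single: "keys t \<subseteq> {..<n} \<Longrightarrow> single t c \<in> poly_ring n"
  unfolding poly_ring_iff by simp

lemma poly_ring_sum: "(\<And>i. i \<in> A \<Longrightarrow> f i \<in> poly_ring n) \<Longrightarrow> sum f A \<in> poly_ring n"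
  by (induction A rule: infinite_finite_induct) (auto intro: poly_ring_add)

lemma Var_in_poly_ring: "i < n \<Longrightarrow> Var i \<in> poly_ring n"
  unfolding Var_def by (rule poly_ring_single) simp

lemma ideal_genI: "(\<And>i. a i \<in> poly_ring n) \<Longrightarrow> (\<Sum>i<length fs. a i * fs ! i) \<in> ideal_gen n fs"
  unfolding ideal_gen_def by blast

lemma zero_in_ideal_gen: "0 \<in> ideal_gen n fs"
  using ideal_genI[of "\<lambda>_. 0"] by (simp add: poly_ring_iff)

lemma ideal_gen_Nil: "ideal_gen n [] = {0}"
  using zero_in_ideal_gen[of n "[]"] by (auto simp: ideal_gen_def)

lemma ideal_gen_add:
  assumes "x \<in> ideal_gen n fs" "y \<in> ideal_gen n fs"
  shows "x + y \<in> ideal_gen n fs"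
proof -
  obtain a b where "\<And>i. a i \<in> poly_ring n" "\<And>i. b i \<in> poly_ring n"
    and "x = (\<Sum>i<length fs. a i * fs ! i)" "y = (\<Sum>i<length fs. b i * fs ! i)"
    using assms unfolding ideal_gen_def by blast
  then show ?thesis
    using ideal_genI[of "\<lambda>i. a i + b i" n fs]
    by (simp add: poly_ring_add sum.distrib distrib_right)
qed

lemma ideal_gen_mult:
  assumes "x \<in> ideal_gen n fs" "c \<in> poly_ring n"
  shows "c * x \<in> ideal_gen n fs"
proof -
  obtain a where "\<And>i. a i \<in> poly_ring n" "x = (\<Sum>i<length fs. a i * fs ! i)"
    using assms(1) unfolding ideal_gen_def by blast
  then show ?thesis
    using ideal_genI[of "\<lambda>i. c * a i" n fs] assms(2)
    by (simp add: poly_ring_mult sum_distrib_left mult.assoc)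
qed

lemma ideal_gen_diff:
  assumes "x \<in> ideal_gen n fs" "y \<in> ideal_gen n fs"
  shows "x - y \<in> ideal_gen n fs"
  using ideal_gen_add[OF assms(1) ideal_gen_mult[OF assms(2), of "- 1"]]
  by (simp add: poly_ring_uminus)

lemma nth_in_ideal_gen_take:
  assumes "j < k" "k \<le> length fs"
  shows "fs ! j \<in> ideal_gen n (take k fs)"
proof -
  have "(\<Sum>i<length (take k fs). (if i = j then 1 else 0) * take k fs ! i)
      = (\<Sum>i<k. if i = j then fs ! j else 0)"
    using assms by (intro sum.cong) auto
  also have "\<dots> = fs ! j"
    using assms by simp
  finally show ?thesis
    using ideal_genI[of "\<lambda>i. if i = j then 1 else 0" n "take k fs"] by simp
qed

lemma ideal_gen_take_Suc:
  assumes "k < length fs" "h \<in> ideal_gen n (take (Suc k) fs)"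
  obtains p a where "p \<in> ideal_gen n (take k fs)" "a \<in> poly_ring n" "h = p + a * fs ! k"
proof -
  obtain a where a: "\<And>i. a i \<in> poly_ring n"
    "h = (\<Sum>i<length (take (Suc k) fs). a i * take (Suc k) fs ! i)"
    using assms(2) unfolding ideal_gen_def by blast
  have "(\<Sum>i<length (take k fs). a i * take k fs ! i) \<in> ideal_gen n (take k fs)"
    using a(1) by (rule ideal_genI)
  moreover have "h = (\<Sum>i<length (take k fs). a i * take k fs ! i) + a k * fs ! k"
    unfolding a(2) using assms(1) by (simp add: min_absorb2)
  ultimately show ?thesis using that a(1) by blast
qed

section \<open>Monomials and weights\<close>

definition monom_dvd :: "monom \<Rightarrow> monom \<Rightarrow> bool" where
  "monom_dvd m t \<longleftrightarrow> (\<forall>i. lookup m i \<le> lookup t i)"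

definition monom_coprime :: "monom \<Rightarrow> monom \<Rightarrow> bool" where
  "monom_coprime a b \<longleftrightarrow> keys a \<inter> keys b = {}"

lemma monom_dvd_add_self: "monom_dvd m (s + m)"
  by (simp add: monom_dvd_def lookup_add)

lemma monom_dvd_diff_add: "monom_dvd m t \<Longrightarrow> t - m + m = t"
  unfolding monom_dvd_def by (intro poly_mapping_eqI) (simp add: lookup_add lookup_minus)

lemma monom_dvd_zero: "monom_dvd m 0 \<Longrightarrow> m = 0"
  unfolding monom_dvd_def by (intro poly_mapping_eqI) simp

lemma monom_dvd_coprime_add:
  assumes "monom_coprime a b" "monom_dvd a (t + b)"
  shows "monom_dvd a t"
  unfolding monom_dvd_def
proof
  fix i
  have "lookup a i = 0 \<or> lookup b i = 0"
    using assms(1) by (auto simp: monom_coprime_def in_keys_iff)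
  moreover have "lookup a i \<le> lookup t i + lookup b i"
    using assms(2) by (simp add: monom_dvd_def lookup_add)
  ultimately show "lookup a i \<le> lookup t i" by auto
qed

lemma keys_diff_monom: "keys (t - m :: monom) \<subseteq> keys t"
  by (auto simp: in_keys_iff lookup_minus)

locale monomial_weight =
  fixes \<omega> :: "monom \<Rightarrow> nat"
  assumes weight_add: "\<omega> (a + b) = \<omega> a + \<omega> b"
begin

definition max_term :: "mpoly \<Rightarrow> monom \<Rightarrow> bool" where
  "max_term p t \<longleftrightarrow> t \<in> keys p \<and> (\<forall>s\<in>keys p. \<omega> s \<le> \<omega> t)"

definition initial_monom :: "mpoly \<Rightarrow> monom \<Rightarrow> bool" where
  "initial_monom f m \<longleftrightarrow> lookup f m \<noteq> 0 \<and> (\<forall>u\<in>keys f. u \<noteq> m \<longrightarrow> \<omega> u < \<omega> m)"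

lemma max_term_exists:
  assumes "p \<noteq> 0"
  obtains t where "max_term p t"
proof -
  have "Max (\<omega> ` keys p) \<in> \<omega> ` keys p"
    using assms by (intro Max_in) auto
  then obtain t where "t \<in> keys p" "\<omega> t = Max (\<omega> ` keys p)"
    by (metis imageE)
  moreover have "\<forall>s\<in>keys p. \<omega> s \<le> Max (\<omega> ` keys p)"
    by simp
  ultimately show ?thesis
    using that unfolding max_term_def by metis
qed

lemma max_term_add_dominant:
  assumes dominant: "s \<in> keys p" "\<forall>u\<in>keys q. \<omega> u < \<omega> s"
    and t: "max_term (p + q) t"
  shows "max_term p t"
proof -
  have "s \<notin> keys q"
    using dominant by blast
  then have "s \<in> keys (p + q)"
    using dominant by (simp add: in_keys_iff lookup_add)
  then have "\<omega> s \<le> \<omega> t"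
    using t by (simp add: max_term_def)
  then have "t \<notin> keys q"
    using dominant(2) by (auto simp: not_less[symmetric])
  then have "t \<in> keys p"
    using t keys_add[of p q] by (auto simp: max_term_def)
  moreover have "\<omega> s' \<le> \<omega> t" if "s' \<in> keys p" for s'
  proof (cases "\<forall>u\<in>keys q. \<omega> u < \<omega> s'")
    case True
    then have "s' \<in> keys (p + q)"
      using that by (auto simp: in_keys_iff lookup_add)
    then show ?thesis
      using t by (simp add: max_term_def)
  next
    case False
    then obtain u where "u \<in> keys q" "\<omega> s' \<le> \<omega> u"
      by (auto simp: not_less)
    moreover have "\<omega> u < \<omega> s"
      using dominant(2) \<open>u \<in> keys q\<close> by blast
    ultimately show ?thesis
      using \<open>\<omega> s \<le> \<omega> t\<close> by linarith
  qed
  ultimately show ?thesis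
    by (simp add: max_term_def)
qed

lemma lookup_mult_initial:
  assumes "initial_monom f m" "\<forall>s\<in>keys q. \<omega> s \<le> \<omega> t"
  shows "lookup (q * f) (t + m) = lookup q t * lookup f m"
proof -
  have only_top: "(lookup q a * lookup f b when t + m = a + b)
      = (if a = t \<and> b = m then lookup q t * lookup f m else 0)"
    if "a \<in> keys q" "b \<in> keys f" for a b
  proof (cases "t + m = a + b")
    case True
    have "b = m"
    proof (rule ccontr)
      assume "b \<noteq> m"
      then have "\<omega> b < \<omega> m"
        using assms(1) that(2) by (simp add: initial_monom_def)
      moreover have "\<omega> a \<le> \<omega> t"
        using assms(2) that(1) by blast
      moreover have "\<omega> t + \<omega> m = \<omega> a + \<omega> b"
        using True by (metis weight_add)
      ultimately show False
        by linarith
    qed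
    then show ?thesis
      using True by simp
  qed auto
  have "lookup (q * f) (t + m)
      = (\<Sum>a\<in>keys q. \<Sum>b\<in>keys f. if a = t \<and> b = m then lookup q t * lookup f m else 0)"
    unfolding lookup_mult_keys by (intro sum.cong refl) (simp add: only_top)
  also have "\<dots> = (\<Sum>a\<in>keys q. if a = t then lookup q t * lookup f m else 0)"
  proof (intro sum.cong refl)
    fix a
    have "m \<in> keys f"
      using assms(1) by (simp add: initial_monom_def in_keys_iff)
    then show "(\<Sum>b\<in>keys f. if a = t \<and> b = m then lookup q t * lookup f m else 0)
        = (if a = t then lookup q t * lookup f m else 0)"
      by (cases "a = t") simp_all
  qed
  also have "\<dots> = lookup q t * lookup f m"
    by (simp add: in_keys_iff)
  finally show ?thesis .
qed

lemma initial_monom_weight_le: "initial_monom f m \<Longrightarrow> u \<in> keys f \<Longrightarrow> \<omega> u \<le> \<omega> m"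
  by (cases "u = m") (auto simp: initial_monom_def)

lemma max_term_mult_initial:
  assumes f: "initial_monom f m" and q: "max_term q t"
  shows "max_term (q * f) (t + m)"
proof -
  have "lookup (q * f) (t + m) = lookup q t * lookup f m"
    using f q by (intro lookup_mult_initial) (auto simp: max_term_def)
  then have "t + m \<in> keys (q * f)"
    using f q by (simp add: in_keys_iff initial_monom_def max_term_def)
  moreover have "\<omega> s \<le> \<omega> (t + m)" if s: "s \<in> keys (q * f)" for s
  proof -
    obtain a b where "s = a + b" "a \<in> keys q" "b \<in> keys f"
      using keys_mult[of q f] s by blast
    then show ?thesis
      using q initial_monom_weight_le[OF f] by (simp add: weight_add max_term_def add_mono)
  qed
  ultimately show ?thesis
    by (simp add: max_term_def)
qed

lemma max_term_mult_initial_dvd: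
  assumes f: "initial_monom f m" and s: "max_term (q * f) s"
  shows "monom_dvd m s"
proof -
  obtain a b where ab: "s = a + b" "a \<in> keys q" "b \<in> keys f"
    using keys_mult[of q f] s by (auto simp: max_term_def)
  have "q \<noteq> 0"
    using ab(2) by auto
  then obtain t where t: "max_term q t"
    by (rule max_term_exists)
  have "b = m"
  proof (rule ccontr)
    assume "b \<noteq> m"
    then have "\<omega> b < \<omega> m"
      using f ab(3) by (simp add: initial_monom_def)
    moreover have "\<omega> a \<le> \<omega> t"
      using t ab(2) by (simp add: max_term_def)
    moreover have "\<omega> (t + m) \<le> \<omega> s"
      using s max_term_mult_initial[OF f t] by (simp add: max_term_def)
    ultimately show False
      using ab(1) by (simp add: weight_add)
  qed
  then show ?thesis
    using ab(1) monom_dvd_add_self by simp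
qed

lemma initial_monom_single_mult:
  assumes f: "initial_monom f m" and "c \<noteq> 0"
  shows "initial_monom (single u c * f) (u + m)" "lookup (single u c * f) (u + m) = c * lookup f m"
proof -
  show lookup: "lookup (single u c * f) (u + m) = c * lookup f m"
    using lookup_mult_initial[OF f, of "single u c" u] by simp
  have "\<omega> s < \<omega> (u + m)" if s: "s \<in> keys (single u c * f)" "s \<noteq> u + m" for s
  proof -
    obtain b where "s = u + b" "b \<in> keys f"
      using keys_mult[of "single u c" f] s(1) \<open>c \<noteq> 0\<close> by auto
    then show ?thesis
      using f s(2) by (auto simp: initial_monom_def weight_add)
  qed
  then show "initial_monom (single u c * f) (u + m)"
    using f \<open>c \<noteq> 0\<close> lookup by (simp add: initial_monom_def)
qed

lemma initial_monom_single: "c \<noteq> 0 \<Longrightarrow> initial_monom (single m c) m"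
  by (simp add: initial_monom_def)

lemma initial_monom_add_lower:
  assumes f: "initial_monom f m" and lower: "\<forall>u\<in>keys g. \<omega> u < \<omega> m"
  shows "initial_monom (f + g) m"
proof -
  have "m \<notin> keys g"
    using lower by blast
  then have "lookup (f + g) m = lookup f m"
    by (simp add: lookup_add in_keys_iff)
  then show ?thesis
    using f lower keys_add[of f g] by (auto simp: initial_monom_def)
qed

lemma initial_monom_sum_single:
  assumes "finite I" "i0 \<in> I" and heaviest: "\<And>i. i \<in> I \<Longrightarrow> i \<noteq> i0 \<Longrightarrow> \<omega> (\<mu> i) < \<omega> (\<mu> i0)"
  shows "initial_monom (\<Sum>i\<in>I. single (\<mu> i) 1) (\<mu> i0)"
proof -
  have "(\<Sum>i\<in>I. single (\<mu> i) 1) = single (\<mu> i0) 1 + (\<Sum>i\<in>I - {i0}. single (\<mu> i) (1::complex))"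
    using assms(1,2) by (simp add: sum.remove)
  moreover have "\<forall>u\<in>keys (\<Sum>i\<in>I - {i0}. single (\<mu> i) (1::complex)). \<omega> u < \<omega> (\<mu> i0)"
    using keys_sum[of "\<lambda>i. single (\<mu> i) (1::complex)" "I - {i0}"] heaviest by fastforce
  ultimately show ?thesis
    by (simp add: initial_monom_add_lower initial_monom_single)
qed

lemma initial_monom_binomial:
  assumes "\<omega> B < \<omega> A"
  shows "initial_monom (single A 1 - single B 1) A" "initial_monom (single B 1 - single A 1) A"
proof -
  have "initial_monom (single A c + single B d) A" if "c \<noteq> 0" for c d
    using assms that by (intro initial_monom_add_lower initial_monom_single) auto
  from this[of 1 "- 1"] this[of "- 1" 1] show
    "initial_monom (single A 1 - single B 1) A" "initial_monom (single B 1 - single A 1) A"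
    by (simp_all add: single_uminus)
qed

end

section \<open>Coprime initial monomials give a regular sequence\<close>

locale coprime_initial_monomials = monomial_weight +
  fixes n :: nat and fs :: "mpoly list" and ms :: "monom list"
  assumes fs_in_poly_ring: "set fs \<subseteq> poly_ring n"
    and initial: "j < length fs \<Longrightarrow> initial_monom (fs ! j) (ms ! j)"
    and coprime: "i < length fs \<Longrightarrow> j < length fs \<Longrightarrow> i \<noteq> j \<Longrightarrow> monom_coprime (ms ! i) (ms ! j)"
    and nonconstant: "j < length fs \<Longrightarrow> ms ! j \<noteq> 0"
begin

definition reducible :: "nat \<Rightarrow> monom \<Rightarrow> bool" where
  "reducible k t \<longleftrightarrow> (\<exists>j<k. monom_dvd (ms ! j) t)"

lemma reducible_Suc: "reducible k t \<Longrightarrow> reducible (Suc k) t"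
  unfolding reducible_def using less_Suc_eq by blast

lemma not_reducible_shift:
  assumes "k < length fs" "\<not> reducible k t"
  shows "\<not> reducible k (t + ms ! k)"
  using assms coprime monom_dvd_coprime_add unfolding reducible_def
  by (metis less_trans nat_neq_iff)

lemma reducer_exists:
  assumes k: "k \<le> length fs" and t: "reducible k t" "keys t \<subseteq> {..<n}" and "c \<noteq> 0"
  obtains r where "r \<in> ideal_gen n (take k fs)" "r \<in> poly_ring n" "initial_monom r t"
    "lookup r t = c"
proof -
  obtain j where j: "j < k" "monom_dvd (ms ! j) t"
    using t(1) by (auto simp: reducible_def)
  define u where "u = t - ms ! j"
  define d where "d = c / lookup (fs ! j) (ms ! j)"
  have f: "initial_monom (fs ! j) (ms ! j)"
    using initial j(1) k by simp
  then have "d \<noteq> 0"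
    using \<open>c \<noteq> 0\<close> by (simp add: d_def initial_monom_def)
  have u: "u + ms ! j = t"
    unfolding u_def using j(2) by (rule monom_dvd_diff_add)
  have "single u d \<in> poly_ring n"
    using t(2) keys_diff_monom[of t "ms ! j"] by (intro poly_ring_single) (auto simp: u_def)
  then have "single u d * fs ! j \<in> ideal_gen n (take k fs)" "single u d * fs ! j \<in> poly_ring n"
    using j(1) k fs_in_poly_ring
    by (auto intro!: ideal_gen_mult nth_in_ideal_gen_take poly_ring_mult)
  moreover have "initial_monom (single u d * fs ! j) t" "lookup (single u d * fs ! j) t = c"
    using initial_monom_single_mult[OF f \<open>d \<noteq> 0\<close>, of u] f
    by (simp_all add: u d_def initial_monom_def)
  ultimately show ?thesis
    using that by blast
qed

lemma reduce_top_layer: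
  assumes k: "k \<le> length fs"
  shows "g \<in> poly_ring n \<Longrightarrow> \<forall>t\<in>keys g. reducible k t \<longrightarrow> \<omega> t \<le> W \<Longrightarrow>
    \<exists>r\<in>ideal_gen n (take k fs). g - r \<in> poly_ring n \<and> (\<forall>t\<in>keys (g - r). reducible k t \<longrightarrow> \<omega> t < W)"
proof (induction "card {t\<in>keys g. reducible k t \<and> \<omega> t = W}" arbitrary: g)
  case 0
  then have "\<forall>t\<in>keys g. reducible k t \<longrightarrow> \<omega> t < W"
    using le_neq_implies_less by fastforce
  then show ?case
    using "0.prems"(1) by (intro bexI[of _ 0]) (auto simp: zero_in_ideal_gen)
next
  case (Suc c)
  then obtain t where t: "t \<in> keys g" "reducible k t" "\<omega> t = W"
    by (metis (mono_tags, lifting) card.empty empty_Collect_eq nat.distinct(1))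
  have "keys t \<subseteq> {..<n}"
    using Suc.prems(1) t(1) by (auto simp: poly_ring_iff)
  then obtain r where r: "r \<in> ideal_gen n (take k fs)" "r \<in> poly_ring n" "initial_monom r t"
    "lookup r t = lookup g t"
    using reducer_exists[OF k t(2)] t(1) by (metis in_keys_iff)
  have top_layer: "lookup (g - r) s = (if s = t then 0 else lookup g s)" if "\<omega> s = W" for s
    using r(3,4) that t(3) by (auto simp: initial_monom_def lookup_minus in_keys_iff)
  have "{s\<in>keys (g - r). reducible k s \<and> \<omega> s = W} = {t\<in>keys g. reducible k t \<and> \<omega> t = W} - {t}"
    using top_layer by (auto simp: in_keys_iff split: if_splits)
  then have "c = card {s\<in>keys (g - r). reducible k s \<and> \<omega> s = W}"
    using Suc.hyps(2) t by simp
  moreover have "\<forall>s\<in>keys (g - r). reducible k s \<longrightarrow> \<omega> s \<le> W"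
    using Suc.prems(2) keys_diff[of g r] initial_monom_weight_le[OF r(3)] t(3) by blast
  ultimately obtain r' where r': "r' \<in> ideal_gen n (take k fs)" "g - r - r' \<in> poly_ring n"
    "\<forall>s\<in>keys (g - r - r'). reducible k s \<longrightarrow> \<omega> s < W"
    using Suc.hyps(1) Suc.prems(1) r(2) poly_ring_diff by blast
  then show ?case
    using ideal_gen_add[OF r(1) r'(1)] by (metis diff_diff_eq)
qed

lemma reduced_remainder_exists:
  assumes k: "k \<le> length fs" and g: "g \<in> poly_ring n"
  shows "\<exists>r\<in>ideal_gen n (take k fs). g - r \<in> poly_ring n \<and> (\<forall>t\<in>keys (g - r). \<not> reducible k t)"
proof -
  have "\<exists>r\<in>ideal_gen n (take k fs). g - r \<in> poly_ring n \<and> (\<forall>t\<in>keys (g - r). \<not> reducible k t)"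
    if "g \<in> poly_ring n" "\<forall>t\<in>keys g. reducible k t \<longrightarrow> \<omega> t < W" for g W
    using that
  proof (induction W arbitrary: g)
    case 0
    then show ?case
      by (intro bexI[of _ 0]) (auto simp: zero_in_ideal_gen)
  next
    case (Suc W)
    then obtain r where r: "r \<in> ideal_gen n (take k fs)" "g - r \<in> poly_ring n"
      "\<forall>t\<in>keys (g - r). reducible k t \<longrightarrow> \<omega> t < W"
      using reduce_top_layer[OF k, of g W] by (auto simp: less_Suc_eq_le)
    then obtain r' where "r' \<in> ideal_gen n (take k fs)" "g - r - r' \<in> poly_ring n"
      "\<forall>t\<in>keys (g - r - r'). \<not> reducible k t"
      using Suc.IH by blast
    then show ?case
      using ideal_gen_add[OF r(1)] by (metis diff_diff_eq)
  qed
  moreover have "\<forall>t\<in>keys g. reducible k t \<longrightarrow> \<omega> t < Suc (Max (\<omega> ` keys g))"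
    by (simp add: le_imp_less_Suc)
  ultimately show ?thesis
    using g by blast
qed

lemma max_term_reducible_step:
  assumes k: "k < length fs"
    and p: "\<And>s. max_term p s \<Longrightarrow> reducible k s"
    and a: "\<forall>s\<in>keys a. \<not> reducible k s"
    and t: "max_term (p + a * fs ! k) t"
  shows "reducible (Suc k) t"
proof (cases "a = 0")
  case True
  then show ?thesis
    using p t reducible_Suc by simp
next
  case False
  let ?q = "a * fs ! k"
  obtain ta where ta: "max_term a ta"
    using False by (rule max_term_exists)
  define T where "T = ta + ms ! k"
  have T: "max_term ?q T"
    unfolding T_def using initial[OF k] ta by (rule max_term_mult_initial)
  have "\<not> reducible k T"
    unfolding T_def using k a ta by (intro not_reducible_shift) (auto simp: max_term_def)
  show ?thesis
  proof (cases "\<exists>s\<in>keys p. \<forall>u\<in>keys ?q. \<omega> u < \<omega> s")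
    case True
    then show ?thesis
      using max_term_add_dominant t p reducible_Suc by blast
  next
    case False
    txt \<open>Nothing in p outweighs T, and T is not a top term of p because it is not reducible;
      so T survives in the sum, whose top weight is therefore that of T.\<close>
    have below_T: "\<omega> s \<le> \<omega> T" if s: "s \<in> keys p \<union> keys ?q" for s
    proof -
      obtain u where "u \<in> keys ?q" "\<omega> s \<le> \<omega> u"
        using False s by (auto simp: not_less)
      moreover have "\<omega> u \<le> \<omega> T"
        using T \<open>u \<in> keys ?q\<close> by (simp add: max_term_def)
      ultimately show ?thesis
        by linarith
    qed
    have "T \<notin> keys p"
      using p below_T \<open>\<not> reducible k T\<close> by (auto simp: max_term_def)
    then have "T \<in> keys (p + ?q)"
      using T by (simp add: max_term_def in_keys_iff lookup_add)
    then have "\<omega> T \<le> \<omega> t"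
      using t by (simp add: max_term_def)
    moreover have "\<omega> t \<le> \<omega> T"
      using t below_T keys_add[of p ?q] by (auto simp: max_term_def)
    ultimately have "\<omega> t = \<omega> T"
      by simp
    show ?thesis
    proof (cases "t \<in> keys ?q")
      case True
      then have "max_term ?q t"
        using T \<open>\<omega> t = \<omega> T\<close> by (simp add: max_term_def)
      then show ?thesis
        using max_term_mult_initial_dvd[OF initial[OF k]] by (auto simp: reducible_def)
    next
      case False
      then have "max_term p t"
        using t below_T keys_add[of p ?q] \<open>\<omega> t = \<omega> T\<close> by (auto simp: max_term_def)
      then show ?thesis
        using p reducible_Suc by blast
    qed
  qed
qed

lemma max_term_reducible:
  "k \<le> length fs \<Longrightarrow> h \<in> ideal_gen n (take k fs) \<Longrightarrow> max_term h t \<Longrightarrow> reducible k t"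
proof (induction k arbitrary: h t)
  case 0
  then show ?case
    by (simp add: ideal_gen_Nil max_term_def)
next
  case (Suc k)
  then have k: "k < length fs"
    by simp
  obtain p a where pa: "p \<in> ideal_gen n (take k fs)" "a \<in> poly_ring n" "h = p + a * fs ! k"
    using ideal_gen_take_Suc[OF k Suc.prems(2)] by blast
  obtain r where r: "r \<in> ideal_gen n (take k fs)" "\<forall>s\<in>keys (a - r). \<not> reducible k s"
    using reduced_remainder_exists[of k a] k pa(2) by auto
  have "p + r * fs ! k \<in> ideal_gen n (take k fs)"
    using pa(1) r(1) fs_in_poly_ring k
    by (auto intro!: ideal_gen_add ideal_gen_mult simp: mult.commute[of r])
  then have IH: "\<And>s. max_term (p + r * fs ! k) s \<Longrightarrow> reducible k s"
    using Suc.IH k by simp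
  have "h = (p + r * fs ! k) + (a - r) * fs ! k"
    using pa(3) by (simp add: algebra_simps)
  then show ?case
    using max_term_reducible_step[OF k IH r(2)] Suc.prems(3) by simp
qed

lemma nonzerodivisor:
  assumes k: "k < length fs" and g: "g \<in> poly_ring n"
    and zero_divisor: "g * fs ! k \<in> ideal_gen n (take k fs)"
  shows "g \<in> ideal_gen n (take k fs)"
proof -
  obtain r where r: "r \<in> ideal_gen n (take k fs)" "\<forall>s\<in>keys (g - r). \<not> reducible k s"
    using reduced_remainder_exists[of k g] k g by auto
  have "(g - r) * fs ! k = g * fs ! k - fs ! k * r"
    by (simp add: algebra_simps)
  then have in_ideal: "(g - r) * fs ! k \<in> ideal_gen n (take k fs)"
    using zero_divisor r(1) fs_in_poly_ring k by (auto intro!: ideal_gen_diff ideal_gen_mult)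
  have "g - r = 0"
  proof (rule ccontr)
    assume "g - r \<noteq> 0"
    then obtain t where t: "max_term (g - r) t"
      by (rule max_term_exists)
    then have "max_term ((g - r) * fs ! k) (t + ms ! k)"
      using initial[OF k] max_term_mult_initial by blast
    then have "reducible k (t + ms ! k)"
      using max_term_reducible[OF _ in_ideal] k by simp
    moreover have "\<not> reducible k t"
      using r(2) t by (simp add: max_term_def)
    ultimately show False
      using not_reducible_shift[OF k] by blast
  qed
  then show ?thesis
    using r(1) by simp
qed

theorem regular_sequence: "regular_seq n fs"
  unfolding regular_seq_def
proof (intro conjI allI impI ballI)
  show "set fs \<subseteq> poly_ring n"
    by (rule fs_in_poly_ring)
  show "1 \<notin> ideal_gen n fs"
  proof
    assume "1 \<in> ideal_gen n fs"
    then have "reducible (length fs) 0"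
      using max_term_reducible[of "length fs" 1 0] by (simp add: max_term_def)
    then show False
      using nonconstant monom_dvd_zero by (auto simp: reducible_def)
  qed
qed (use nonzerodivisor in blast)

end

definition mvar :: "nat \<Rightarrow> monom" where
  "mvar i = single i 1"

lemma keys_mvar [simp]: "keys (mvar i) = {i}"
  by (simp add: mvar_def)

lemma mvar_add_nonzero: "mvar i + t \<noteq> 0"
proof
  assume "mvar i + t = 0"
  then have "keys (mvar i + t) = {}"
    by simp
  then show False
    by (simp add: keys_add_monom)
qed

lemma Var_eq_single: "Var i = single (mvar i) 1"
  by (simp add: Var_def mvar_def)

lemma Var_mult: "Var a * Var b = single (mvar a + mvar b) 1"
  by (simp add: Var_eq_single mult_single)

definition linear_weight :: "(nat \<Rightarrow> nat) \<Rightarrow> monom \<Rightarrow> nat" where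
  "linear_weight wt t = (\<Sum>i\<in>keys t. lookup t i * wt i)"

lemma linear_weight_superset:
  "finite S \<Longrightarrow> keys t \<subseteq> S \<Longrightarrow> linear_weight wt t = (\<Sum>i\<in>S. lookup t i * wt i)"
  unfolding linear_weight_def by (rule sum.mono_neutral_left) (auto simp: in_keys_iff)

lemma linear_weight_add: "linear_weight wt (a + b) = linear_weight wt a + linear_weight wt b"
  using linear_weight_superset[of "keys a \<union> keys b"]
  by (simp add: keys_add_monom lookup_add sum.distrib distrib_right)

interpretation linear_weight: monomial_weight "linear_weight wt" for wt
  by unfold_locales (rule linear_weight_add)

lemma linear_weight_mvar [simp]: "linear_weight wt (mvar i) = wt i"
  by (simp add: linear_weight_def mvar_def)

lemma initial_monom_sum_Var:
  fixes N :: nat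
  assumes "i0 < N" "\<And>i. i < N \<Longrightarrow> i \<noteq> i0 \<Longrightarrow> wt (v i) < wt (v i0)"
  shows "linear_weight.initial_monom wt (\<Sum>i<N. Var (v i)) (mvar (v i0))"
  unfolding Var_eq_single using assms
  by (intro linear_weight.initial_monom_sum_single[where \<mu> = "\<lambda>i. mvar (v i)"]) auto

lemma initial_monom_sum_Var_mult:
  fixes N :: nat
  assumes "i0 < N" "\<And>i. i < N \<Longrightarrow> i \<noteq> i0 \<Longrightarrow> wt (v i) + wt (w i) < wt (v i0) + wt (w i0)"
  shows "linear_weight.initial_monom wt (\<Sum>i<N. Var (v i) * Var (w i)) (mvar (v i0) + mvar (w i0))"
  unfolding Var_mult using assms
  by (intro linear_weight.initial_monom_sum_single[where \<mu> = "\<lambda>i. mvar (v i) + mvar (w i)"])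
    (auto simp: linear_weight_add)

section \<open>The generators of \<open>I\<^sub>N\<close>\<close>

text \<open>
  Indices start at 0 here: a_i, b_i, c_i, d_i are X_(4i), ..., X_(4i+3). In the weight table
  a_0, b_1, c_2, d_0 are the heaviest variables of their kind, b_0 c_0 outweighs a_0 d_0, and
  a_i d_i outweighs b_i c_i for i > 0; initials_I lists the resulting initial monomials in the
  order of gens_I.
\<close>

definition weight_I :: "nat \<Rightarrow> nat" where
  "weight_I k = (if k < 12 then [9, 10, 10, 9, 8, 11, 0, 8, 8, 0, 11, 8] ! k
    else if k mod 4 = 0 then 1 else 0)"

definition initials_I :: "nat \<Rightarrow> monom list" where
  "initials_I N = [mvar 0, mvar 5, mvar 10, mvar 3] @
    map (\<lambda>i. if i = 0 then mvar (4*i+1) + mvar (4*i+2) else mvar (4*i) + mvar (4*i+3)) [0..<N]"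

lemma less_3_cases: "i < (3::nat) \<Longrightarrow> i = 0 \<or> i = 1 \<or> i = 2"
  by auto

lemma less_4_cases: "c < (4::nat) \<Longrightarrow> c = 0 \<or> c = 1 \<or> c = 2 \<or> c = 3"
  by auto

lemma weight_I_tail: "3 \<le> i \<Longrightarrow> c < 4 \<Longrightarrow> weight_I (4*i + c) = (if c = 0 then 1 else 0)"
  unfolding weight_I_def by presburger

lemma weight_I_linear_heaviest:
  assumes "c < 4" "i \<noteq> [0, 1, 2, 0] ! c"
  shows "weight_I (4*i + c) < weight_I (4 * ([0, 1, 2, 0] ! c) + c)"
proof (cases "i < 3")
  case True
  then show ?thesis
    using less_4_cases[OF assms(1)] less_3_cases[OF True] assms(2)
    by (elim disjE) (simp_all add: weight_I_def)
next
  case False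
  then show ?thesis
    using less_4_cases[OF assms(1)] weight_I_tail[OF _ assms(1), of i]
    by (elim disjE) (simp_all add: weight_I_def)
qed

lemma weight_I_quadric:
  assumes "0 < i"
  shows "weight_I (4*i+1) + weight_I (4*i+2) < weight_I (4*i) + weight_I (4*i+3)"
proof (cases "i < 3")
  case True
  then show ?thesis
    using assms less_3_cases[OF True] by (elim disjE) (simp_all add: weight_I_def)
next
  case False
  then show ?thesis
    using weight_I_tail[of i 0] weight_I_tail[of i 1] weight_I_tail[of i 2] weight_I_tail[of i 3]
    by simp
qed

lemma length_gens_I: "length (gens_I N) = 4 + N"
  by (simp add: gens_I_def)

lemma gens_I_linear: "c < 4 \<Longrightarrow> gens_I N ! c = (\<Sum>i<N. Var (4*i + c))"
  by (auto dest!: less_4_cases simp: gens_I_def ka_def kb_def kc_def kd_def nth_append)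

lemma gens_I_quadric:
  "i < N \<Longrightarrow> gens_I N ! (4 + i) =
    single (mvar (4*i) + mvar (4*i+3)) 1 - single (mvar (4*i+1) + mvar (4*i+2)) 1"
  by (simp add: gens_I_def nth_append ka_def kb_def kc_def kd_def Var_mult)

lemma gens_I_in_poly_ring: "set (gens_I N) \<subseteq> poly_ring (4*N)"
  by (auto simp: gens_I_def ka_def kb_def kc_def kd_def
      intro!: poly_ring_sum poly_ring_diff poly_ring_mult Var_in_poly_ring)

lemma initial_monoms_I:
  assumes N: "3 \<le> N" and j: "j < length (gens_I N)"
  shows "linear_weight.initial_monom weight_I (gens_I N ! j) (initials_I N ! j)"
proof (cases "j < 4")
  case True
  define i0 where "i0 = [0::nat, 1, 2, 0] ! j"
  have "initials_I N ! j = mvar (4 * i0 + j)" "i0 < N"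
    using True N by (auto dest!: less_4_cases simp: initials_I_def nth_append i0_def)
  moreover have "weight_I (4*i + j) < weight_I (4*i0 + j)" if "i \<noteq> i0" for i
    using weight_I_linear_heaviest[OF True] that unfolding i0_def by blast
  ultimately show ?thesis
    using initial_monom_sum_Var[where v = "\<lambda>i. 4*i + j" and wt = weight_I] True
    by (simp add: gens_I_linear)
next
  case False
  define i where "i = j - 4"
  have i: "i < N" "j = 4 + i"
    using False j by (simp_all add: i_def length_gens_I)
  let ?ad = "mvar (4*i) + mvar (4*i+3)" and ?bc = "mvar (4*i+1) + mvar (4*i+2)"
  have gen: "gens_I N ! j = single ?ad 1 - single ?bc 1"
    using i by (simp add: gens_I_quadric)
  show ?thesis
  proof (cases "i = 0")
    case True
    have "initials_I N ! j = ?bc"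
      using i True by (simp add: initials_I_def nth_append)
    moreover have "linear_weight weight_I ?ad < linear_weight weight_I ?bc"
      using True by (simp add: linear_weight_add weight_I_def)
    ultimately show ?thesis
      unfolding gen by (simp add: linear_weight.initial_monom_binomial)
  next
    case False
    have "initials_I N ! j = ?ad"
      using i False by (simp add: initials_I_def nth_append)
    moreover have "linear_weight weight_I ?bc < linear_weight weight_I ?ad"
      using False weight_I_quadric[of i] by (simp add: linear_weight_add)
    ultimately show ?thesis
      unfolding gen by (simp add: linear_weight.initial_monom_binomial)
  qed
qed

lemma keys_initials_I_linear: "j < 4 \<Longrightarrow> keys (initials_I N ! j) = {[0, 5, 10, 3] ! j}"
  by (auto dest!: less_4_cases simp: initials_I_def nth_append)

lemma keys_initials_I_quadric:
  assumes "i < N" "k \<in> keys (initials_I N ! (4 + i))"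
  shows "k div 4 = i" "k \<notin> {0, 5, 10, 3}"
proof -
  have "(i = 0 \<and> (k = 1 \<or> k = 2)) \<or> (0 < i \<and> (k = 4*i \<or> k = 4*i + 3))"
    using assms by (auto simp: initials_I_def nth_append keys_add_monom split: if_splits)
  then show "k div 4 = i" "k \<notin> {0, 5, 10, 3}"
    by (auto; presburger)+
qed

lemma initials_I_coprime:
  assumes "j < 4 + N" "j' < 4 + N" "j < j'"
  shows "monom_coprime (initials_I N ! j) (initials_I N ! j')"
  unfolding monom_coprime_def
proof (cases "j' < 4")
  case True
  have "j < 4"
    using True assms(3) by simp
  then show "keys (initials_I N ! j) \<inter> keys (initials_I N ! j') = {}"
    using less_4_cases[OF \<open>j < 4\<close>] less_4_cases[OF True] assms(3)
    by (elim disjE) (simp_all add: keys_initials_I_linear)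
next
  case False
  define i' where "i' = j' - 4"
  have i': "i' < N" "j' = 4 + i'"
    using False assms(2) by (simp_all add: i'_def)
  show "keys (initials_I N ! j) \<inter> keys (initials_I N ! j') = {}"
  proof (cases "j < 4")
    case True
    then have "keys (initials_I N ! j) \<subseteq> {0, 5, 10, 3}"
      by (auto dest!: less_4_cases simp: keys_initials_I_linear)
    then show ?thesis
      using keys_initials_I_quadric(2)[OF i'(1)] i'(2) by blast
  next
    case False
    have "j - 4 < N" "j = 4 + (j - 4)" "j - 4 \<noteq> i'"
      using False assms i' by simp_all
    then show ?thesis
      using keys_initials_I_quadric(1) i' by (metis disjoint_iff)
  qed
qed

lemma initials_I_nonzero: "j < 4 + N \<Longrightarrow> initials_I N ! j \<noteq> 0"
  using mvar_add_nonzero[of _ 0]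
  by (cases "j < 4") (auto dest!: less_4_cases simp: initials_I_def nth_append mvar_add_nonzero)

lemma regular_seq_gens_I:
  assumes "3 \<le> N"
  shows "regular_seq (4*N) (gens_I N)"
proof -
  interpret coprime_initial_monomials "linear_weight weight_I" "4*N" "gens_I N" "initials_I N"
  proof unfold_locales
    show "set (gens_I N) \<subseteq> poly_ring (4*N)"
      by (rule gens_I_in_poly_ring)
    show "linear_weight.initial_monom weight_I (gens_I N ! j) (initials_I N ! j)"
      if "j < length (gens_I N)" for j
      using assms that by (rule initial_monoms_I)
    show "monom_coprime (initials_I N ! i) (initials_I N ! j)"
      if "i < length (gens_I N)" "j < length (gens_I N)" "i \<noteq> j" for i j
      using that initials_I_coprime[of i N j] initials_I_coprime[of j N i]
      by (auto simp: length_gens_I monom_coprime_def Int_commute nat_neq_iff)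
    show "initials_I N ! j \<noteq> 0" if "j < length (gens_I N)" for j
      using that by (rule initials_I_nonzero[unfolded length_gens_I[symmetric]])
  qed
  show ?thesis
    by (rule regular_sequence)
qed

section \<open>The generators of \<open>I'\<^sub>N\<close>\<close>

text \<open>
  The entry (r, l) of the sum of the v_i w_i^T has the initial term v_i0,r w_i0,l with
  (r, l, i0) one of (0, 0, 0), (0, 1, 1), (1, 0, 2), (1, 1, 0).
\<close>

definition weight_I' :: "nat \<Rightarrow> nat" where
  "weight_I' k = (if k < 12 then [2, 2, 2, 2, 3, 0, 0, 3, 0, 3, 3, 0] ! k else 0)"

definition initials_I' :: "monom list" where
  "initials_I' = [mvar 0 + mvar 2, mvar 4 + mvar 7, mvar 9 + mvar 10, mvar 1 + mvar 3]"

lemma weight_I'_heaviest: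
  assumes "(r, l, i0) \<in> {(0, 0, 0), (0, 1, 1), (1, 0, 2), (1, 1, 0)}" "i \<noteq> i0"
  shows "weight_I' (4*i + r) + weight_I' (4*i + 2 + l) < weight_I' (4*i0 + r) + weight_I' (4*i0 + 2 + l)"
proof (cases "i < 3")
  case True
  then show ?thesis
    using assms less_3_cases[OF True] by (elim disjE) (auto simp: weight_I'_def)
next
  case False
  then show ?thesis
    using assms by (auto simp: weight_I'_def)
qed

lemma length_gens_I': "length (gens_I' N) = 4"
  by (simp add: gens_I'_def)

lemma gens_I'_in_poly_ring: "set (gens_I' N) \<subseteq> poly_ring (4*N)"
  by (auto simp: gens_I'_def vv_def ww_def intro!: poly_ring_sum poly_ring_mult Var_in_poly_ring)

lemma initial_monom_gens_I'_entry:
  assumes "3 \<le> N" "(r, l, i0) \<in> {(0, 0, 0), (0, 1, 1), (1, 0, 2), (1, 1, 0)}"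
  shows "linear_weight.initial_monom weight_I' (\<Sum>i<N. vv i r * ww i l)
    (mvar (4*i0 + r) + mvar (4*i0 + 2 + l))"
  unfolding vv_def ww_def
proof (rule initial_monom_sum_Var_mult[where v = "\<lambda>i. 4*i + r" and w = "\<lambda>i. 4*i + 2 + l"])
  show "i0 < N"
    using assms by auto
  show "weight_I' (4*i + r) + weight_I' (4*i + 2 + l) < weight_I' (4*i0 + r) + weight_I' (4*i0 + 2 + l)"
    if "i \<noteq> i0" for i
    using assms(2) that by (rule weight_I'_heaviest)
qed

lemma initial_monoms_I':
  assumes N: "3 \<le> N" and j: "j < length (gens_I' N)"
  shows "linear_weight.initial_monom weight_I' (gens_I' N ! j) (initials_I' ! j)"
  using less_4_cases[of j] j
    initial_monom_gens_I'_entry[OF N, of 0 0 0] initial_monom_gens_I'_entry[OF N, of 0 1 1]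
    initial_monom_gens_I'_entry[OF N, of 1 0 2] initial_monom_gens_I'_entry[OF N, of 1 1 0]
  by (auto simp: length_gens_I' gens_I'_def initials_I'_def numeral_2_eq_2 numeral_3_eq_3)

lemma initials_I'_coprime:
  "i < 4 \<Longrightarrow> j < 4 \<Longrightarrow> i \<noteq> j \<Longrightarrow> monom_coprime (initials_I' ! i) (initials_I' ! j)"
  using less_4_cases[of i] less_4_cases[of j]
  by (auto simp: monom_coprime_def initials_I'_def keys_add_monom)

lemma regular_seq_gens_I':
  assumes "3 \<le> N"
  shows "regular_seq (4*N) (gens_I' N)"
proof -
  interpret coprime_initial_monomials "linear_weight weight_I'" "4*N" "gens_I' N" initials_I'
  proof unfold_locales
    show "set (gens_I' N) \<subseteq> poly_ring (4*N)"
      by (rule gens_I'_in_poly_ring)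
    show "linear_weight.initial_monom weight_I' (gens_I' N ! j) (initials_I' ! j)"
      if "j < length (gens_I' N)" for j
      using assms that by (rule initial_monoms_I')
    show "monom_coprime (initials_I' ! i) (initials_I' ! j)"
      if "i < length (gens_I' N)" "j < length (gens_I' N)" "i \<noteq> j" for i j
      using that by (simp add: length_gens_I' initials_I'_coprime)
    show "initials_I' ! j \<noteq> 0" if "j < length (gens_I' N)" for j
      using that less_4_cases[of j] by (auto simp: length_gens_I' initials_I'_def mvar_add_nonzero)
  qed
  show ?thesis
    by (rule regular_sequence)
qed

theorem mainTheorem9:
  fixes N :: nat
  assumes "N \<ge> 3"
  shows "regular_seq (4*N) (gens_I N) \<and> regular_seq (4*N) (gens_I' N)"
  using regular_seq_gens_I[OF assms] regular_seq_gens_I'[OF assms] by blast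

end
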